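(* Let $0 < \epsilon < 1/20$. Then for all sufficiently large $n$ (depending on $\epsilon$), writing $G = (\mathbb{Z}/2\mathbb{Z})^n$ and $N = 2^n$, there is a function $f : G \to [0,1]$ such that every subgroup $H \leq G$ which is $\epsilon$-regular for $f$ satisfies $|G/H| \geq W\!\left(\tfrac12\log_2(1/\epsilon) - 5\right)$.
   Context: For a subgroup $H \leq G$ and $g \in G$ define $f_H^{+g} : H \to [0,1]$ by $f_H^{+g}(x) = f(x+g)$. An element $g \in G$ is an $\epsilon$-regular value for $f$ (with respect to $H$) if $\left|\sum_{x \in H} f_H^{+g}(x)\chi(x)\right| \leq \epsilon|H|$ for every nontrivial character $\chi$ of $H$. $H$ is $\epsilon$-regular for $f$ if the number of $g \in G$ which are not $\epsilon$-regular values is at most $\epsilon N$. $W(t)$ is a tower of twos of height $\lceil t\rceil$: $W(t) = w_{\max(\lceil t\rceil,0)}$ where $w_0 = 1$, $w_{h+1} = 2^{w_h}$. *)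

theory Defs
  imports Complex_Main
begin

text \<open>The group G = (Z/2Z)^n is modelled as the subsets of {0..<n}
  (an element is the support of its 0/1 coordinate vector); the group
  operation is symmetric difference, with neutral element the empty set.\<close>

definition cube :: "nat \<Rightarrow> nat set set" where
  "cube n = Pow {0..<n}"

definition gadd :: "nat set \<Rightarrow> nat set \<Rightarrow> nat set" where
  "gadd x y = (x - y) \<union> (y - x)"

definition is_subgroup :: "nat \<Rightarrow> nat set set \<Rightarrow> bool" where
  "is_subgroup n H \<longleftrightarrow> H \<subseteq> cube n \<and> {} \<in> H \<and>
     (\<forall>x\<in>H. \<forall>y\<in>H. gadd x y \<in> H)"

definition is_character :: "nat set set \<Rightarrow> (nat set \<Rightarrow> complex) \<Rightarrow> bool" where
  "is_character H \<chi> \<longleftrightarrow> (\<forall>x\<in>H. \<chi> x \<noteq> 0) \<and>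
     (\<forall>x\<in>H. \<forall>y\<in>H. \<chi> (gadd x y) = \<chi> x * \<chi> y)"

definition nontrivial_character :: "nat set set \<Rightarrow> (nat set \<Rightarrow> complex) \<Rightarrow> bool" where
  "nontrivial_character H \<chi> \<longleftrightarrow> is_character H \<chi> \<and> (\<exists>x\<in>H. \<chi> x \<noteq> 1)"

definition regular_value ::
  "nat set set \<Rightarrow> (nat set \<Rightarrow> real) \<Rightarrow> real \<Rightarrow> nat set \<Rightarrow> bool" where
  "regular_value H f \<epsilon> g \<longleftrightarrow>
     (\<forall>\<chi>. nontrivial_character H \<chi> \<longrightarrow>
        cmod (\<Sum>x\<in>H. complex_of_real (f (gadd x g)) * \<chi> x) \<le> \<epsilon> * real (card H))"

definition regular_subgroup ::
  "nat \<Rightarrow> nat set set \<Rightarrow> (nat set \<Rightarrow> real) \<Rightarrow> real \<Rightarrow> bool" where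
  "regular_subgroup n H f \<epsilon> \<longleftrightarrow>
     real (card {g \<in> cube n. \<not> regular_value H f \<epsilon> g}) \<le> \<epsilon> * 2 ^ n"

fun tower :: "nat \<Rightarrow> nat" where
  "tower 0 = 1"
| "tower (Suc h) = 2 ^ tower h"

definition W :: "real \<Rightarrow> nat" where
  "W t = tower (nat \<lceil>t\<rceil>)"

end

theory Submission
  imports Defs
begin

(* Cut the coordinates into consecutive blocks [D l, D (l+1)), block l having about 2^(D l) / 4
   coordinates, so that D l grows like a tower of twos.  Let f be the sum of 4^-(l+1) f_l, where
   f_l x is the parity of x on a subset of block l chosen, through a binary linear code of
   relative distance 1/16, by the coordinates of x below D l.  Let H be a subgroup vanishing below
   D i and containing some h with a coordinate in block i.  For at least 1/16 of all g the set
   chosen by g meets h in an odd number of points, and then the corresponding character of H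
   detects a Fourier coefficient of size about 4^-i |H| of f on g + H: the f_l with l < i are
   constant there, f_i correlates perfectly with the character, and the f_l with l > i are too
   small to cancel it.  So an eps-regular subgroup vanishes below D s, with s about log_4 (1/eps),
   and its index is at least 2^(D s). *)

section \<open>Walsh characters\<close>

lemma card_gadd:
  assumes "finite A" "finite B"
  shows "card (gadd A B) + 2 * card (A \<inter> B) = card A + card B"
proof -
  have "A \<union> B = gadd A B \<union> (A \<inter> B)" "gadd A B \<inter> (A \<inter> B) = {}"
    by (auto simp: gadd_def)
  then have "card (A \<union> B) = card (gadd A B) + card (A \<inter> B)"
    using assms by (simp add: card_Un_disjoint gadd_def)
  then show ?thesis
    using card_Un_Int[OF assms] by simp
qed

lemma gadd_Int_eq_if_disjoint: "x \<inter> S = {} \<Longrightarrow> gadd x g \<inter> S = g \<inter> S"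
  by (auto simp: gadd_def)

lemma gadd_cancel: "gadd (gadd x h) h = x"
  by (auto simp: gadd_def)

definition walsh :: "nat set \<Rightarrow> nat set \<Rightarrow> real" where
  "walsh T x = (if odd (card (x \<inter> T)) then -1 else 1)"

lemma walsh_cong: "x \<inter> T = y \<inter> T \<Longrightarrow> walsh T x = walsh T y"
  by (simp add: walsh_def)

lemma walsh_abs [simp]: "\<bar>walsh T x\<bar> = 1"
  by (simp add: walsh_def)

lemma walsh_mult_self [simp]: "walsh T x * walsh T x = 1"
  by (simp add: walsh_def)

lemma walsh_gadd:
  assumes "finite T"
  shows "walsh T (gadd x y) = walsh T x * walsh T y"
proof -
  have "gadd x y \<inter> T = gadd (x \<inter> T) (y \<inter> T)"
    by (auto simp: gadd_def)
  then have "card (gadd x y \<inter> T) + 2 * card ((x \<inter> T) \<inter> (y \<inter> T)) = card (x \<inter> T) + card (y \<inter> T)"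
    using card_gadd[of "x \<inter> T" "y \<inter> T"] assms by simp
  then have "odd (card (gadd x y \<inter> T)) \<longleftrightarrow> odd (card (x \<inter> T)) \<noteq> odd (card (y \<inter> T))"
    by presburger
  then show ?thesis
    by (auto simp: walsh_def)
qed

lemma subgroup_finite: "is_subgroup n H \<Longrightarrow> finite H"
  unfolding is_subgroup_def cube_def by (meson finite_Pow_iff finite_atLeastLessThan finite_subset)

lemma subgroup_card_pos: "is_subgroup n H \<Longrightarrow> 0 < card H"
  using subgroup_finite[of n H] by (auto simp: is_subgroup_def card_gt_0_iff)

lemma sum_walsh_subgroup:
  assumes H: "is_subgroup n H" and "h \<in> H" "walsh T h = -1" "finite T"
  shows "(\<Sum>x\<in>H. walsh T x) = 0"
proof -
  have "(\<Sum>x\<in>H. walsh T x) = (\<Sum>x\<in>H. walsh T (gadd x h))"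
    using H \<open>h \<in> H\<close> unfolding is_subgroup_def
    by (intro sum.reindex_bij_witness[of _ "\<lambda>x. gadd x h" "\<lambda>x. gadd x h"]) (auto simp: gadd_cancel)
  also have "\<dots> = - (\<Sum>x\<in>H. walsh T x)"
    using assms by (simp add: walsh_gadd sum_negf)
  finally show ?thesis
    by simp
qed

lemma regular_value_walsh:
  assumes "regular_value H f \<epsilon> g" "finite T" "h \<in> H" "walsh T h = -1"
  shows "\<bar>\<Sum>x\<in>H. f (gadd x g) * walsh T x\<bar> \<le> \<epsilon> * card H"
proof -
  have "nontrivial_character H (\<lambda>x. complex_of_real (walsh T x))"
    unfolding nontrivial_character_def is_character_def
  proof (intro conjI ballI bexI[of _ h])
    show "complex_of_real (walsh T x) \<noteq> 0" for x
      by (simp add: walsh_def)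
  qed (use assms(2-4) in \<open>simp_all add: walsh_gadd\<close>)
  then have "cmod (\<Sum>x\<in>H. complex_of_real (f (gadd x g)) * complex_of_real (walsh T x)) \<le> \<epsilon> * card H"
    using assms(1) unfolding regular_value_def by blast
  then show ?thesis
    by (simp flip: of_real_mult of_real_sum)
qed

section \<open>Binary codes from the greedy construction\<close>

text \<open>The columns of \<open>c\<close> span a binary linear code of length \<open>card A\<close> and minimum distance
  at least \<open>k\<close>.\<close>

definition parity_code :: "'a set \<Rightarrow> nat \<Rightarrow> nat \<Rightarrow> ('a \<Rightarrow> nat set) \<Rightarrow> bool" where
  "parity_code A m k c \<longleftrightarrow> (\<forall>a. c a \<subseteq> {0..<m}) \<and>
     (\<forall>v\<subseteq>{0..<m}. v \<noteq> {} \<longrightarrow> k \<le> card {a\<in>A. odd (card (v \<inter> c a))})"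

lemma exists_far_subset:
  assumes "finite A" "F \<subseteq> Pow A"
    and "card F * card {z. z \<subseteq> A \<and> card z < k} < 2 ^ card A"
  shows "\<exists>u\<subseteq>A. \<forall>w\<in>F. k \<le> card (sym_diff w u)"
proof -
  let ?B = "{z. z \<subseteq> A \<and> card z < k}"
  let ?near = "{u. u \<subseteq> A \<and> (\<exists>w\<in>F. card (sym_diff w u) < k)}"
  have "finite (Pow A)"
    using assms(1) by simp
  then have fin: "finite F" "finite ?B" "finite ?near"
    using assms(2) by (auto intro: finite_subset[of _ "Pow A"])
  have "?near \<subseteq> (\<Union>w\<in>F. sym_diff w ` ?B)"
  proof
    fix u assume "u \<in> ?near"
    then obtain w where "u \<subseteq> A" "w \<in> F" "card (sym_diff w u) < k"
      by blast
    moreover have "u = sym_diff w (sym_diff w u)"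
      by auto
    moreover have "sym_diff w u \<subseteq> A"
      using \<open>u \<subseteq> A\<close> \<open>w \<in> F\<close> assms(2) by auto
    ultimately show "u \<in> (\<Union>w\<in>F. sym_diff w ` ?B)"
      by blast
  qed
  then have "card ?near \<le> card (\<Union>w\<in>F. sym_diff w ` ?B)"
    using fin by (intro card_mono) auto
  also have "\<dots> \<le> (\<Sum>w\<in>F. card (sym_diff w ` ?B))"
    by (rule card_UN_le) (rule fin)
  also have "\<dots> \<le> (\<Sum>w\<in>F. card ?B)"
    by (intro sum_mono card_image_le fin)
  also have "\<dots> < card (Pow A)"
    using assms(1,3) by (simp add: card_Pow)
  finally have "\<not> Pow A \<subseteq> ?near"
    using card_mono[OF fin(3)] by (meson not_le)
  then show ?thesis
    by (auto simp: not_less)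
qed

lemma parity_code_Suc:
  assumes c: "parity_code A m k c" and "u \<subseteq> A"
    and far: "\<forall>v\<subseteq>{0..<m}. k \<le> card (sym_diff {a\<in>A. odd (card (v \<inter> c a))} u)"
  shows "parity_code A (Suc m) k (\<lambda>a. if a \<in> u then insert m (c a) else c a)"
    (is "parity_code A (Suc m) k ?c")
  unfolding parity_code_def
proof (intro conjI allI impI)
  have cm: "c a \<subseteq> {0..<m}" for a
    using c by (simp add: parity_code_def)
  show "?c a \<subseteq> {0..<Suc m}" for a
    using cm[of a] by auto
  fix v assume v: "v \<subseteq> {0..<Suc m}" "v \<noteq> {}"
  show "k \<le> card {a\<in>A. odd (card (v \<inter> ?c a))}"
  proof (cases "m \<in> v")
    case False
    then have "v \<subseteq> {0..<m}"
      using v(1) by (auto simp: less_Suc_eq)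
    then have "k \<le> card {a\<in>A. odd (card (v \<inter> c a))}"
      using c v(2) unfolding parity_code_def by blast
    moreover have "v \<inter> ?c a = v \<inter> c a" for a
      using False by auto
    ultimately show ?thesis
      by simp
  next
    case True
    define v' where "v' = v - {m}"
    have v': "v' \<subseteq> {0..<m}"
      using v(1) by (auto simp: v'_def less_Suc_eq)
    then have "finite v'"
      by (rule finite_subset) simp
    have "odd (card (v \<inter> ?c a)) \<longleftrightarrow> odd (card (v' \<inter> c a)) \<noteq> (a \<in> u)" for a
    proof -
      have "v \<inter> ?c a = (if a \<in> u then insert m (v' \<inter> c a) else v' \<inter> c a)"
        using True cm[of a] by (auto simp: v'_def)
      moreover have "m \<notin> v' \<inter> c a"
        using cm[of a] by auto
      ultimately show ?thesis
        using \<open>finite v'\<close> by simp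
    qed
    then have "{a\<in>A. odd (card (v \<inter> ?c a))} = sym_diff {a\<in>A. odd (card (v' \<inter> c a))} u"
      using \<open>u \<subseteq> A\<close> by blast
    then show ?thesis
      using far v' by simp
  qed
qed

text \<open>The greedy (Gilbert--Varshamov) construction, one column at a time.\<close>

lemma parity_code_exists:
  assumes "finite A" "1 \<le> k" "2 ^ m * card {z. z \<subseteq> A \<and> card z < k} \<le> 2 ^ card A"
  shows "\<exists>c. parity_code A m k c"
  using assms(3)
proof (induction m)
  case 0
  have "parity_code A 0 k (\<lambda>_. {})"
    by (simp add: parity_code_def)
  then show ?case
    by blast
next
  case (Suc m)
  let ?B = "{z. z \<subseteq> A \<and> card z < k}"
  have "finite ?B"
    by (rule finite_subset[of _ "Pow A"]) (auto simp: assms(1))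
  moreover have "{} \<in> ?B"
    using assms(2) by simp
  ultimately have "0 < 2 ^ m * card ?B"
    by (auto simp: card_gt_0_iff)
  moreover have "2 * (2 ^ m * card ?B) \<le> 2 ^ card A"
    using Suc.prems by (simp add: mult.assoc)
  ultimately have less: "2 ^ m * card ?B < 2 ^ card A"
    by linarith
  then have "\<exists>c. parity_code A m k c"
    using Suc.IH by simp
  then obtain c where c: "parity_code A m k c"
    by blast
  let ?w = "\<lambda>v. {a\<in>A. odd (card (v \<inter> c a))}"
  have "?w ` Pow {0..<m} \<subseteq> Pow A"
    by auto
  moreover have "card (?w ` Pow {0..<m}) \<le> 2 ^ m"
    using card_image_le[of "Pow {0..<m}" ?w] by (simp add: card_Pow)
  then have "card (?w ` Pow {0..<m}) * card ?B \<le> 2 ^ m * card ?B"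
    by (rule mult_le_mono1)
  with less have "card (?w ` Pow {0..<m}) * card ?B < 2 ^ card A"
    by linarith
  ultimately have "\<exists>u\<subseteq>A. \<forall>w\<in>?w ` Pow {0..<m}. k \<le> card (sym_diff w u)"
    by (rule exists_far_subset[OF assms(1)])
  then obtain u where "u \<subseteq> A" "\<forall>v\<subseteq>{0..<m}. k \<le> card (sym_diff (?w v) u)"
    by auto
  then have "parity_code A (Suc m) k (\<lambda>a. if a \<in> u then insert m (c a) else c a)"
    by (rule parity_code_Suc[OF c])
  then show ?case
    by blast
qed

lemma card_subsets_card_less:
  assumes "finite A"
  shows "card {z. z \<subseteq> A \<and> card z < k} = (\<Sum>j<k. card A choose j)"
proof -
  have "{z. z \<subseteq> A \<and> card z < k} = (\<Union>j<k. {z. z \<subseteq> A \<and> card z = j})"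
    by auto
  also have "card \<dots> = (\<Sum>j<k. card {z. z \<subseteq> A \<and> card z = j})"
    using assms by (intro card_UN_disjoint) auto
  finally show ?thesis
    using assms by (simp add: n_subsets)
qed

lemma binomial_partial_sum_le:
  fixes b :: nat
  assumes "k \<le> M" "0 < b"
  shows "b ^ M * (\<Sum>j<k. M choose j) \<le> b ^ k * (b + 1) ^ M"
proof -
  have "b ^ M * (\<Sum>j<k. M choose j) = (\<Sum>j<k. (M choose j) * b ^ M)"
    by (simp add: sum_distrib_left mult.commute)
  also have "\<dots> \<le> (\<Sum>j<k. (M choose j) * b ^ (M - j) * b ^ k)"
  proof (rule sum_mono)
    fix j assume "j \<in> {..<k}"
    then have "b ^ M = b ^ (M - j) * b ^ j" "b ^ j \<le> b ^ k"
      using assms by (auto simp flip: power_add intro: power_increasing)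
    then show "(M choose j) * b ^ M \<le> (M choose j) * b ^ (M - j) * b ^ k"
      by (simp add: mult.assoc)
  qed
  also have "\<dots> \<le> (\<Sum>j\<le>M. (M choose j) * b ^ (M - j) * b ^ k)"
    using assms(1) by (intro sum_mono2) auto
  also have "\<dots> = b ^ k * (b + 1) ^ M"
    using binomial_ring[of 1 b M] by (simp add: sum_distrib_left mult.commute add.commute)
  finally show ?thesis .
qed

text \<open>For \<open>d \<ge> 4\<close> the code has length \<open>N = 2^d\<close>, dimension \<open>N/4\<close> and distance \<open>N/16\<close>;
  for \<open>d < 4\<close> the trivial code of dimension \<open>N\<close> and distance 1 suffices.\<close>

definition code_dim :: "nat \<Rightarrow> nat" where
  "code_dim d = (if d < 4 then 2 ^ d else 2 ^ (d - 2))"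

definition code_dist :: "nat \<Rightarrow> nat" where
  "code_dist d = (if d < 4 then 1 else 2 ^ (d - 4))"

lemma code_dim_ge: "2 ^ (d - 2) \<le> code_dim d"
  unfolding code_dim_def by (auto intro: power_increasing)

lemma code_dist_ge: "2 ^ d \<le> 16 * code_dist d"
proof (cases "d < 4")
  case True
  then have "(2::nat) ^ d \<le> 2 ^ 4"
    by (intro power_increasing) auto
  then show ?thesis
    using True by (simp add: code_dist_def)
next
  case False
  then have "d = 4 + (d - 4)"
    by simp
  then have "(2::nat) ^ d = 2 ^ 4 * 2 ^ (d - 4)"
    by (metis power_add)
  then show ?thesis
    using False by (simp add: code_dist_def)
qed

lemma parity_code_dyadic: "\<exists>c. parity_code (Pow {0..<d}) (code_dim d) (code_dist d) c"
proof (cases "d < 4")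
  case True
  have "card {z. z \<subseteq> Pow {0..<d} \<and> card z < 1} = 1"
    using card_subsets_card_less[of "Pow {0..<d}" 1] by simp
  then show ?thesis
    using True by (intro parity_code_exists) (simp_all add: code_dim_def code_dist_def card_Pow)
next
  case False
  define q where "q = (2::nat) ^ (d - 4)"
  have "d = 4 + (d - 4)" "d - 2 = 2 + (d - 4)"
    using False by simp_all
  then have "(2::nat) ^ d = 2 ^ 4 * q" "(2::nat) ^ (d - 2) = 2 ^ 2 * q"
    unfolding q_def by (metis power_add)+
  then have N: "card (Pow {0..<d}) = 16 * q" and m: "code_dim d = 4 * q" and k: "code_dist d = q"
    using False by (simp_all add: card_Pow code_dim_def code_dist_def q_def)
  define S where "S = (\<Sum>j<q. (16 * q) choose j)"
  have "3 ^ (16 * q) * S \<le> 3 ^ q * 4 ^ (16 * q)"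
    unfolding S_def using binomial_partial_sum_le[of q "16 * q" 3] by simp
  then have "2 ^ (4 * q) * (3 ^ (16 * q) * S) \<le> 2 ^ (4 * q) * (3 ^ q * 4 ^ (16 * q))"
    by (rule mult_left_mono) simp
  also have "\<dots> = (2 ^ 4 * 3 * 4 ^ 16) ^ q"
    by (simp only: power_mult power_mult_distrib mult.assoc)
  also have "\<dots> \<le> (2 ^ 16 * 3 ^ 16) ^ q"
    by (rule power_mono) simp_all
  also have "\<dots> = 2 ^ (16 * q) * 3 ^ (16 * q)"
    by (simp only: power_mult power_mult_distrib)
  finally have "2 ^ (4 * q) * S \<le> 2 ^ (16 * q)"
    by (simp add: ac_simps)
  moreover have "1 \<le> q"
    by (simp add: q_def)
  ultimately show ?thesis
    unfolding N m k S_def by (intro parity_code_exists) (simp_all add: card_subsets_card_less N)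
qed

definition code :: "nat \<Rightarrow> nat set \<Rightarrow> nat set" where
  "code d = (SOME c. parity_code (Pow {0..<d}) (code_dim d) (code_dist d) c)"

lemma parity_code_code: "parity_code (Pow {0..<d}) (code_dim d) (code_dist d) (code d)"
  unfolding code_def using parity_code_dyadic by (rule someI_ex)

lemma code_subset: "code d a \<subseteq> {0..<code_dim d}"
  using parity_code_code[of d] by (simp add: parity_code_def)

section \<open>The level functions\<close>

fun block_start :: "nat \<Rightarrow> nat" where
  "block_start 0 = 0"
| "block_start (Suc l) = block_start l + code_dim (block_start l)"

lemma block_start_mono: "l \<le> l' \<Longrightarrow> block_start l \<le> block_start l'"
  by (rule lift_Suc_mono_le[of block_start]) auto

lemma tower_le_block_start: "tower l \<le> block_start (Suc l)"
proof -
  have "tower l + 2 \<le> block_start (Suc l)" if "2 \<le> l" for l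
    using that
  proof (induction l rule: dec_induct)
    case base
    show ?case
      by (simp add: numeral_2_eq_2 code_dim_def)
  next
    case (step l)
    have "tower (Suc l) \<le> 2 ^ (block_start (Suc l) - 2)"
      using step.IH by (simp add: power_increasing)
    also have "\<dots> \<le> code_dim (block_start (Suc l))"
      by (rule code_dim_ge)
    finally show ?case
      using step.IH by simp
  qed
  moreover have "tower l \<le> block_start (Suc l)" if "l < 2"
    using that by (auto simp: less_2_cases_iff code_dim_def)
  ultimately show ?thesis
    by (meson add_leD1 not_le)
qed

definition level_set :: "nat \<Rightarrow> nat set \<Rightarrow> nat set" where
  "level_set l a = (+) (block_start l) ` code (block_start l) a"

lemma level_set_subset: "level_set l a \<subseteq> {block_start l..<block_start (Suc l)}"
  using code_subset[of "block_start l" a] by (auto simp: level_set_def)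

lemma finite_level_set: "finite (level_set l a)"
  using finite_subset[OF code_subset] by (simp add: level_set_def)

lemma card_Int_level_set:
  "card (h \<inter> level_set l a) = card ({j. block_start l + j \<in> h} \<inter> code (block_start l) a)"
proof -
  have "h \<inter> level_set l a = (+) (block_start l) ` ({j. block_start l + j \<in> h} \<inter> code (block_start l) a)"
    by (auto simp: level_set_def)
  then show ?thesis
    by (simp add: card_image)
qed

definition level_bit :: "nat \<Rightarrow> nat set \<Rightarrow> real" where
  "level_bit l x = (1 - walsh (level_set l (x \<inter> {0..<block_start l})) x) / 2"

definition level_sum :: "nat \<Rightarrow> nat set \<Rightarrow> real" where
  "level_sum s x = (\<Sum>l<s. (1/4) ^ Suc l * level_bit l x)"

lemma level_bit_bounds: "0 \<le> level_bit l x" "level_bit l x \<le> 1"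
  by (auto simp: level_bit_def walsh_def)

lemma sum_quarter_powers:
  assumes "i \<le> s"
  shows "(\<Sum>l\<in>{i..<s}. (1/4::real) ^ Suc l) = ((1/4) ^ i - (1/4) ^ s) / 3"
  using assms
proof (induction s rule: dec_induct)
  case (step s)
  have "(\<Sum>l\<in>{i..<Suc s}. (1/4::real) ^ Suc l) = (\<Sum>l\<in>{i..<s}. (1/4) ^ Suc l) + (1/4) ^ Suc s"
    using step.hyps(1) by (rule sum.atLeastLessThan_Suc)
  with step.IH show ?case
    by simp
qed simp

lemma sum_quarter_powers_le: "(\<Sum>l\<in>{i..<s}. (1/4::real) ^ Suc l) \<le> (1/4) ^ i / 3"
proof (cases "i \<le> s")
  case True
  have "0 \<le> (1/4::real) ^ s"
    by simp
  then show ?thesis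
    unfolding sum_quarter_powers[OF True] by (intro divide_right_mono) simp_all
qed simp

lemma level_sum_bounds: "0 \<le> level_sum s x" "level_sum s x \<le> 1"
proof -
  show "0 \<le> level_sum s x"
    unfolding level_sum_def by (intro sum_nonneg) (simp add: level_bit_bounds)
  have "level_sum s x \<le> (\<Sum>l\<in>{0..<s}. (1/4) ^ Suc l)"
    unfolding level_sum_def atLeast0LessThan
    by (intro sum_mono) (simp add: level_bit_bounds)
  also have "\<dots> \<le> 1"
    using sum_quarter_powers_le[of 0 s] by simp
  finally show "level_sum s x \<le> 1" .
qed

lemma level_bit_translate_below:
  assumes "x \<inter> {0..<block_start (Suc l)} = {}"
  shows "level_bit l (gadd x g) = level_bit l g"
proof -
  have "block_start l \<le> block_start (Suc l)"
    by simp
  then have low: "gadd x g \<inter> {0..<block_start l} = g \<inter> {0..<block_start l}"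
    using assms by (intro gadd_Int_eq_if_disjoint) auto
  let ?T = "level_set l (g \<inter> {0..<block_start l})"
  have "?T \<subseteq> {0..<block_start (Suc l)}"
    using level_set_subset[of l "g \<inter> {0..<block_start l}"] by auto
  then have "x \<inter> ?T = {}"
    using assms by blast
  then have "walsh ?T (gadd x g) = walsh ?T g"
    by (intro walsh_cong gadd_Int_eq_if_disjoint)
  then show ?thesis
    unfolding level_bit_def low by simp
qed

lemma level_bit_translate_at:
  assumes "x \<inter> {0..<block_start l} = {}"
  shows "level_bit l (gadd x g) =
    (1 - walsh (level_set l (g \<inter> {0..<block_start l})) x *
         walsh (level_set l (g \<inter> {0..<block_start l})) g) / 2"
  unfolding level_bit_def gadd_Int_eq_if_disjoint[OF assms]
  by (simp add: walsh_gadd finite_level_set)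

lemma sum_level_bit_walsh_below:
  assumes H: "is_subgroup n H" and low: "\<forall>x\<in>H. x \<inter> {0..<block_start i} = {}" and "l < i"
    and "h \<in> H" "walsh T h = -1" "finite T"
  shows "(\<Sum>x\<in>H. level_bit l (gadd x g) * walsh T x) = 0"
proof -
  have "{0..<block_start (Suc l)} \<subseteq> {0..<block_start i}"
    using block_start_mono[of "Suc l" i] \<open>l < i\<close> by auto
  then have "level_bit l (gadd x g) = level_bit l g" if "x \<in> H" for x
    using low that by (intro level_bit_translate_below) blast
  then have "(\<Sum>x\<in>H. level_bit l (gadd x g) * walsh T x) = level_bit l g * (\<Sum>x\<in>H. walsh T x)"
    by (simp add: sum_distrib_left)
  also have "\<dots> = 0"
    using sum_walsh_subgroup[OF H assms(4-6)] by simp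
  finally show ?thesis .
qed

lemma sum_level_bit_walsh_at:
  assumes H: "is_subgroup n H" and low: "\<forall>x\<in>H. x \<inter> {0..<block_start i} = {}"
    and "h \<in> H" and T: "T = level_set i (g \<inter> {0..<block_start i})" and "walsh T h = -1"
  shows "(\<Sum>x\<in>H. level_bit i (gadd x g) * walsh T x) = - walsh T g * card H / 2"
proof -
  have pointwise: "level_bit i (gadd x g) * walsh T x = (walsh T x - walsh T g) / 2"
    if "x \<in> H" for x
  proof -
    have "level_bit i (gadd x g) = (1 - walsh T x * walsh T g) / 2"
      using level_bit_translate_at[of x i g] low that unfolding T by simp
    moreover have "(1 - a * b) / 2 * a = (a - b * (a * a)) / 2" for a b :: real
      by (simp add: algebra_simps)
    ultimately show ?thesis
      by (simp only: walsh_mult_self mult_1_right)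
  qed
  have "finite T"
    by (simp add: T finite_level_set)
  have "(\<Sum>x\<in>H. level_bit i (gadd x g) * walsh T x) = (\<Sum>x\<in>H. (walsh T x - walsh T g) / 2)"
    using pointwise by (rule sum.cong[OF refl])
  also have "\<dots> = - walsh T g * card H / 2"
    unfolding sum_divide_distrib[symmetric] sum_subtractf
      sum_walsh_subgroup[OF H \<open>h \<in> H\<close> \<open>walsh T h = -1\<close> \<open>finite T\<close>]
    by simp
  finally show ?thesis .
qed

lemma abs_sum_level_bit_walsh_le: "\<bar>\<Sum>x\<in>H. level_bit l (gadd x g) * walsh T x\<bar> \<le> card H"
proof -
  have "\<bar>\<Sum>x\<in>H. level_bit l (gadd x g) * walsh T x\<bar> \<le> (\<Sum>x\<in>H. \<bar>level_bit l (gadd x g) * walsh T x\<bar>)"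
    by (rule sum_abs)
  also have "\<dots> \<le> (\<Sum>x\<in>H. 1)"
    by (intro sum_mono) (simp add: abs_mult level_bit_bounds)
  finally show ?thesis
    by simp
qed

text \<open>The weights \<open>4^-(l+1)\<close> decrease fast enough that the levels above \<open>i\<close> cannot cancel
  the correlation of level \<open>i\<close>; the levels below \<open>i\<close> contribute nothing.\<close>

lemma level_sum_correlation:
  assumes H: "is_subgroup n H" and low: "\<forall>x\<in>H. x \<inter> {0..<block_start i} = {}" and "i < s"
    and "h \<in> H" and T: "T = level_set i (g \<inter> {0..<block_start i})" and "walsh T h = -1"
  shows "(1/4) ^ Suc i * card H / 6 \<le> \<bar>\<Sum>x\<in>H. level_sum s (gadd x g) * walsh T x\<bar>"
proof -
  define corr where "corr l = (\<Sum>x\<in>H. level_bit l (gadd x g) * walsh T x)" for l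
  have "finite T"
    by (simp add: T finite_level_set)
  have "(\<Sum>x\<in>H. level_sum s (gadd x g) * walsh T x) = (\<Sum>l<s. (1/4) ^ Suc l * corr l)"
    by (simp add: level_sum_def corr_def sum_distrib_left sum_distrib_right mult.assoc sum.swap[of _ H])
  also have "\<dots> = (\<Sum>l\<in>{i..<s}. (1/4) ^ Suc l * corr l)"
    using sum_level_bit_walsh_below[OF H low _ \<open>h \<in> H\<close> \<open>walsh T h = -1\<close> \<open>finite T\<close>]
    by (intro sum.mono_neutral_right) (auto simp: corr_def)
  also have "\<dots> = (1/4) ^ Suc i * corr i + (\<Sum>l\<in>{Suc i..<s}. (1/4) ^ Suc l * corr l)"
    using \<open>i < s\<close> by (rule sum.atLeast_Suc_lessThan)
  finally have decomp: "(\<Sum>x\<in>H. level_sum s (gadd x g) * walsh T x) =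
    (1/4) ^ Suc i * corr i + (\<Sum>l\<in>{Suc i..<s}. (1/4) ^ Suc l * corr l)" .
  have "\<bar>\<Sum>l\<in>{Suc i..<s}. (1/4) ^ Suc l * corr l\<bar> \<le> (\<Sum>l\<in>{Suc i..<s}. (1/4) ^ Suc l * card H)"
    unfolding corr_def
    by (rule order_trans[OF sum_abs]) (intro sum_mono, simp add: abs_mult abs_sum_level_bit_walsh_le)
  also have "\<dots> = (\<Sum>l\<in>{Suc i..<s}. (1/4) ^ Suc l) * card H"
    by (rule sum_distrib_right[symmetric])
  also have "\<dots> \<le> (1/4) ^ Suc i / 3 * card H"
    by (intro mult_right_mono sum_quarter_powers_le) simp
  finally have tail: "\<bar>\<Sum>l\<in>{Suc i..<s}. (1/4) ^ Suc l * corr l\<bar> \<le> (1/4) ^ Suc i / 3 * card H" .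
  have "\<bar>(1/4) ^ Suc i * corr i\<bar> = (1/4) ^ Suc i * card H / 2"
    using sum_level_bit_walsh_at[OF H low \<open>h \<in> H\<close> T \<open>walsh T h = -1\<close>]
    by (simp add: corr_def abs_mult)
  then show ?thesis
    using decomp tail by linarith
qed

lemma not_regular_value_level_sum:
  assumes H: "is_subgroup n H" and low: "\<forall>x\<in>H. x \<inter> {0..<block_start i} = {}" and "i < s"
    and "h \<in> H" and odd: "walsh (level_set i (g \<inter> {0..<block_start i})) h = -1"
    and \<epsilon>: "\<epsilon> < (1/4) ^ Suc i / 6"
  shows "\<not> regular_value H (level_sum s) \<epsilon> g"
proof
  let ?T = "level_set i (g \<inter> {0..<block_start i})"
  assume "regular_value H (level_sum s) \<epsilon> g"
  then have "\<bar>\<Sum>x\<in>H. level_sum s (gadd x g) * walsh ?T x\<bar> \<le> \<epsilon> * card H"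
    using regular_value_walsh finite_level_set \<open>h \<in> H\<close> odd by blast
  moreover have "\<epsilon> * card H < (1/4) ^ Suc i * card H / 6"
    using \<epsilon> subgroup_card_pos[OF H] by simp
  ultimately show False
    using level_sum_correlation[OF H low \<open>i < s\<close> \<open>h \<in> H\<close> refl odd] by linarith
qed

section \<open>Regular subgroups avoid the blocks\<close>

lemma card_cube_restrict_ge:
  assumes "D \<le> n" "A \<subseteq> Pow {0..<D}"
  shows "card A * 2 ^ (n - D) \<le> card {g \<in> cube n. g \<inter> {0..<D} \<in> A}"
proof -
  have "finite A"
    using assms(2) by (rule finite_subset) simp
  have "inj_on (\<lambda>(a, b). a \<union> b) (A \<times> Pow {D..<n})"
    by (rule inj_on_inverseI[where g = "\<lambda>g. (g \<inter> {0..<D}, g - {0..<D})"]) (use assms(2) in auto)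
  then have "card A * 2 ^ (n - D) = card ((\<lambda>(a, b). a \<union> b) ` (A \<times> Pow {D..<n}))"
    by (simp add: card_image card_cartesian_product card_Pow)
  also have "\<dots> \<le> card {g \<in> cube n. g \<inter> {0..<D} \<in> A}"
  proof (rule card_mono)
    show "finite {g \<in> cube n. g \<inter> {0..<D} \<in> A}"
      by (simp add: cube_def)
    show "(\<lambda>(a, b). a \<union> b) ` (A \<times> Pow {D..<n}) \<subseteq> {g \<in> cube n. g \<inter> {0..<D} \<in> A}"
    proof (rule image_subsetI)
      fix ab assume "ab \<in> A \<times> Pow {D..<n}"
      then obtain a b where ab: "ab = (a, b)" "a \<in> A" "b \<subseteq> {D..<n}"
        by auto
      have "a \<subseteq> {0..<D}"
        using ab(2) assms(2) by auto
      then have "(a \<union> b) \<inter> {0..<D} = a" "a \<union> b \<in> cube n"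
        using ab(3) assms(1) by (auto simp: cube_def)
      then show "(case ab of (a, b) \<Rightarrow> a \<union> b) \<in> {g \<in> cube n. g \<inter> {0..<D} \<in> A}"
        using ab by simp
    qed
  qed
  finally show ?thesis .
qed

lemma not_regular_subgroup_if_dense_irregular:
  assumes "D \<le> n" "A \<subseteq> Pow {0..<D}" "2 ^ D \<le> 16 * card A" "\<epsilon> * 16 < 1"
    and irregular: "\<And>g. g \<in> cube n \<Longrightarrow> g \<inter> {0..<D} \<in> A \<Longrightarrow> \<not> regular_value H f \<epsilon> g"
  shows "\<not> regular_subgroup n H f \<epsilon>"
proof
  let ?Bad = "{g \<in> cube n. \<not> regular_value H f \<epsilon> g}"
  assume reg: "regular_subgroup n H f \<epsilon>"
  have "card A * 2 ^ (n - D) \<le> card {g \<in> cube n. g \<inter> {0..<D} \<in> A}"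
    using assms(1,2) by (rule card_cube_restrict_ge)
  also have "\<dots> \<le> card ?Bad"
    using irregular by (intro card_mono) (auto simp: cube_def)
  finally have bad: "card A * 2 ^ (n - D) \<le> card ?Bad" .
  have "(2::nat) ^ n = 2 ^ D * 2 ^ (n - D)"
    using \<open>D \<le> n\<close> by (simp flip: power_add)
  also have "\<dots> \<le> 16 * (card A * 2 ^ (n - D))"
    using assms(3) by simp
  also have "\<dots> \<le> 16 * card ?Bad"
    using bad by simp
  finally have "real (2 ^ n) \<le> real (16 * card ?Bad)"
    by (rule of_nat_mono)
  moreover have "real (card ?Bad) \<le> \<epsilon> * 2 ^ n"
    using reg by (simp add: regular_subgroup_def)
  moreover have "\<epsilon> * 16 * 2 ^ n < 1 * 2 ^ n"
    using \<open>\<epsilon> * 16 < 1\<close> by (intro mult_strict_right_mono) simp_all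
  ultimately show False
    by simp
qed

lemma many_odd_level_sets:
  assumes "p \<in> h" "block_start i \<le> p" "p < block_start (Suc i)"
  shows "code_dist (block_start i) \<le> card {a \<in> Pow {0..<block_start i}. walsh (level_set i a) h = -1}"
proof -
  let ?D = "block_start i"
  define v where "v = {j. ?D + j \<in> h} \<inter> {0..<code_dim ?D}"
  have "p - ?D \<in> v"
    using assms by (simp add: v_def)
  then have "v \<noteq> {}" "v \<subseteq> {0..<code_dim ?D}"
    by (auto simp: v_def)
  then have "code_dist ?D \<le> card {a \<in> Pow {0..<?D}. odd (card (v \<inter> code ?D a))}"
    using parity_code_code[of ?D] by (auto simp: parity_code_def)
  moreover have "{j. ?D + j \<in> h} \<inter> code ?D a = v \<inter> code ?D a" for a
    using code_subset[of ?D a] by (auto simp: v_def)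
  then have "walsh (level_set i a) h = -1 \<longleftrightarrow> odd (card (v \<inter> code ?D a))" for a
    by (simp add: walsh_def card_Int_level_set)
  ultimately show ?thesis
    by simp
qed

lemma regular_subgroup_avoids_next_block:
  assumes H: "is_subgroup n H" and reg: "regular_subgroup n H (level_sum s) \<epsilon>"
    and "i < s" "block_start s \<le> n" and \<epsilon>: "\<epsilon> < (1/4) ^ Suc i / 6" "\<epsilon> * 16 < 1"
    and low: "\<forall>x\<in>H. x \<inter> {0..<block_start i} = {}"
  shows "\<forall>x\<in>H. x \<inter> {0..<block_start (Suc i)} = {}"
proof (rule ccontr)
  let ?D = "block_start i"
  assume "\<not> ?thesis"
  then obtain h p where "h \<in> H" "p \<in> h" "p < block_start (Suc i)"
    by auto
  have "?D \<le> p"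
  proof (rule ccontr)
    assume "\<not> ?D \<le> p"
    then have "p \<in> h \<inter> {0..<?D}"
      using \<open>p \<in> h\<close> by simp
    then show False
      using low \<open>h \<in> H\<close> by blast
  qed
  let ?Good = "{a \<in> Pow {0..<?D}. walsh (level_set i a) h = -1}"
  have "code_dist ?D \<le> card ?Good"
    by (rule many_odd_level_sets) fact+
  then have "2 ^ ?D \<le> 16 * card ?Good"
    using code_dist_ge[of ?D] by linarith
  moreover have "?D \<le> n"
    using block_start_mono[of i s] \<open>i < s\<close> \<open>block_start s \<le> n\<close> by simp
  ultimately have "\<not> regular_subgroup n H (level_sum s) \<epsilon>"
    using not_regular_value_level_sum[OF H low \<open>i < s\<close> \<open>h \<in> H\<close> _ \<epsilon>(1)]
    by (intro not_regular_subgroup_if_dense_irregular[OF _ _ _ \<epsilon>(2)]) auto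
  then show False
    using reg by contradiction
qed

lemma regular_subgroup_avoids_blocks:
  assumes H: "is_subgroup n H" and reg: "regular_subgroup n H (level_sum s) \<epsilon>"
    and "block_start s \<le> n" and \<epsilon>: "\<epsilon> < (1/4) ^ s / 6" "\<epsilon> * 16 < 1" and "i \<le> s"
  shows "\<forall>x\<in>H. x \<inter> {0..<block_start i} = {}"
  using \<open>i \<le> s\<close>
proof (induction i)
  case (Suc i)
  have "(1/4::real) ^ s \<le> (1/4) ^ Suc i"
    using Suc.prems by (intro power_decreasing) simp_all
  then have "\<epsilon> < (1/4) ^ Suc i / 6"
    using \<epsilon>(1) by simp
  with Suc show ?case
    using regular_subgroup_avoids_next_block[OF H reg _ \<open>block_start s \<le> n\<close> _ \<epsilon>(2)] by simp
qed simp

lemma regular_subgroup_index_ge: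
  assumes H: "is_subgroup n H" and "regular_subgroup n H (level_sum s) \<epsilon>"
    and "block_start s \<le> n" and "\<epsilon> < (1/4) ^ s / 6" "\<epsilon> * 16 < 1"
  shows "2 ^ block_start s \<le> real (card (cube n)) / card H"
proof -
  have avoid: "\<forall>x\<in>H. x \<inter> {0..<block_start s} = {}"
    by (rule regular_subgroup_avoids_blocks[OF assms le_refl])
  have "H \<subseteq> Pow {block_start s..<n}"
  proof
    fix x assume "x \<in> H"
    then have "x \<subseteq> {0..<n}" "x \<inter> {0..<block_start s} = {}"
      using H avoid by (auto simp: is_subgroup_def cube_def)
    then show "x \<in> Pow {block_start s..<n}"
      by (auto simp: disjoint_iff not_less subset_iff)
  qed
  then have "card H \<le> 2 ^ (n - block_start s)"
    using card_mono[of "Pow {block_start s..<n}" H] by (simp add: card_Pow)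
  then have "2 ^ block_start s * card H \<le> 2 ^ block_start s * (2::nat) ^ (n - block_start s)"
    by (rule mult_le_mono2)
  also have "\<dots> = 2 ^ n"
    using \<open>block_start s \<le> n\<close> by (simp flip: power_add)
  finally have "real (2 ^ block_start s * card H) \<le> real (2 ^ n)"
    by (rule of_nat_mono)
  then show ?thesis
    using subgroup_card_pos[OF H] by (simp add: cube_def card_Pow pos_le_divide_eq)
qed

lemma subgroup_index_ge_1:
  assumes "is_subgroup n H"
  shows "1 \<le> real (card (cube n)) / card H"
  using assms subgroup_card_pos[OF assms] card_mono[of "cube n" H]
  by (simp add: is_subgroup_def cube_def)

lemma eps_small_for_height:
  assumes "0 < \<epsilon>" and K: "K = nat \<lceil>log 2 (1/\<epsilon>) / 2 - 5\<rceil>" "0 < K"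
  shows "\<epsilon> < (1/4) ^ Suc K / 6" "\<epsilon> * 16 < 1"
proof -
  have "real (2 * K + 8) < log 2 (1/\<epsilon>)"
    using K ceiling_correct[of "log 2 (1/\<epsilon>) / 2 - 5"] by linarith
  then have "2 powr real (2 * K + 8) < 1/\<epsilon>"
    using less_log_iff[of 2 "1/\<epsilon>"] assms(1) by simp
  then have "2 ^ (2 * K + 8) < 1/\<epsilon>"
    using powr_realpow[of 2 "2 * K + 8"] by simp
  then have "\<epsilon> < 1 / 2 ^ (2 * K + 8)"
    using assms(1) by (simp add: field_simps)
  moreover have "(2::real) ^ (2 * K + 8) = 4 ^ (K + 4)"
    using power_mult[of "2::real" 2 "K + 4"] by (simp add: algebra_simps)
  ultimately have small: "\<epsilon> < (1/4) ^ (K + 4)"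
    by (simp add: power_one_over)
  have "(1/4::real) ^ (K + 4) = (1/4) ^ Suc K / 64" "0 < (1/4::real) ^ Suc K"
    by (simp_all add: power_add power_one_over)
  then show "\<epsilon> < (1/4) ^ Suc K / 6"
    using small by linarith
  have "(1/4::real) ^ (K + 4) \<le> (1/4) ^ 4" "(1/4::real) ^ 4 = 1/256"
    by (rule power_decreasing) (simp_all add: power_one_over)
  then show "\<epsilon> * 16 < 1"
    using small by linarith
qed

theorem mainTheorem15:
  fixes \<epsilon> :: real
  assumes "0 < \<epsilon>" and "\<epsilon> < 1/20"
  shows "\<exists>n0. \<forall>n\<ge>n0. \<exists>f :: nat set \<Rightarrow> real.
           (\<forall>x\<in>cube n. 0 \<le> f x \<and> f x \<le> 1) \<and>
           (\<forall>H. is_subgroup n H \<and> regular_subgroup n H f \<epsilon> \<longrightarrow>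
              real (W (log 2 (1/\<epsilon>) / 2 - 5)) \<le> real (card (cube n)) / real (card H))"
proof -
  define K where "K = nat \<lceil>log 2 (1/\<epsilon>) / 2 - 5\<rceil>"
  have W: "W (log 2 (1/\<epsilon>) / 2 - 5) = tower K"
    by (simp add: W_def K_def)
  show ?thesis
  proof (cases "K = 0")
    case True
    then show ?thesis
      using subgroup_index_ge_1 W by (intro exI[of _ 0] allI impI exI[of _ "\<lambda>_. 0"]) auto
  next
    case False
    then have "0 < K"
      by simp
    note \<epsilon> = eps_small_for_height[OF assms(1) K_def this]
    have tower: "real (tower K) \<le> 2 ^ block_start (Suc K)"
      using tower_le_block_start[of K] less_exp[of "block_start (Suc K)"]
      by (metis of_nat_le_iff of_nat_numeral of_nat_power order.strict_implies_order order_trans)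
    have "real (W (log 2 (1/\<epsilon>) / 2 - 5)) \<le> real (card (cube n)) / card H"
      if "block_start (Suc K) \<le> n" "is_subgroup n H" "regular_subgroup n H (level_sum (Suc K)) \<epsilon>"
      for n H
      using order_trans[OF tower regular_subgroup_index_ge[OF that(2,3,1) \<epsilon>]] W by simp
    then show ?thesis
      using level_sum_bounds by blast
  qed
qed

end
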